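(* Fix $\epsilon>0$. For all $f\in\mathcal{F}_k$ and all $u\in\mathbb{R}^k$, $\hat\Psi(u)\subseteq\Psi^f(u)$.
   Context: $[k]=\{1,\dots,k\}$, $\mathcal{Y}=\{-1,1\}^k$, $\mathcal{V}=\{-1,0,1\}^k$, $\Delta_\mathcal{Y}$ the distributions on $\mathcal{Y}$. $u\odot u'$ entrywise product, $\mathbbm{1}$ all-ones, $(x)_+$ entrywise positive part; $\boxed{u}=\mathrm{sign}(u)\odot\min(|u|,\mathbbm{1})$ is the entrywise clipping of $u$ to $[-1,1]^k$. For $A\subseteq\mathbb{R}^k$, $d_\infty(A,u)=\inf_{a\in A}\|a-u\|_\infty$. For a permutation $\pi$ of $[k]$ and $i\in\{0,\dots,k\}$, $\mathbbm{1}_{\pi,i}$ is the indicator vector of $\{\pi_1,\dots,\pi_i\}$; $V_{\pi,y}=\{\mathbbm{1}_{\pi,i}\odot y: i=0,\dots,k\}$; $\mathcal{V}^{\text{face}}=\bigcup_{\pi,y\in\mathcal{Y}}2^{V_{\pi,y}}$. $\mathcal{F}_k$: submodular, increasing, normalized set functions $f:2^{[k]}\to\mathbb{R}$. Lovász extension $F(x)=\max_\pi\sum_{i}x_{\pi_i}(f(\{\pi_1,..,\pi_i\})-f(\{\pi_1,..,\pi_{i-1}\}))$; Lovász hinge $L^f(u,y)=F((\mathbbm{1}-u\odot y)_+)$; $L^f(u;p)=\sum_yp_yL^f(u,y)$. Define $\hat\Psi(u)=\bigcap\{V\in\mathcal{V}^{\text{face}}: d_\infty(\mathrm{conv}\,V,\boxed{u})<\epsilon\}$.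 Let $\mathcal{U}^f=\{\arg\min_{u'\in\mathbb{R}^k}L^f(u';p): p\in\Delta_\mathcal{Y}\}$ and $\Psi^f(u)=\mathcal{V}\cap\bigcap\{U\in\mathcal{U}^f: d_\infty(U,u)<\epsilon\}$ (an empty intersection of subsets of $\mathbb{R}^k$ is $\mathbb{R}^k$). *)

theory Defs
  imports "HOL-Analysis.Analysis"
begin

text \<open>The index set [k] is modelled by a finite type 'k (k = CARD('k)); vectors in R^k are real^'k.\<close>

definition Ycube :: "(real^'k) set" where
  "Ycube = {y. \<forall>i. y$i = -1 \<or> y$i = 1}"

definition Vcube :: "(real^'k) set" where
  "Vcube = {v. \<forall>i. v$i = -1 \<or> v$i = 0 \<or> v$i = 1}"

definition DeltaY :: "((real^'k) \<Rightarrow> real) set" where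
  "DeltaY = {p. (\<forall>y. 0 \<le> p y) \<and> (\<forall>y. y \<notin> Ycube \<longrightarrow> p y = 0) \<and> sum p Ycube = 1}"

definition emult :: "real^'k \<Rightarrow> real^'k \<Rightarrow> real^'k" where
  "emult a b = (\<chi> i. a$i * b$i)"

definition clip :: "real^'k \<Rightarrow> real^'k" where
  "clip u = (\<chi> i. sgn (u$i) * min \<bar>u$i\<bar> 1)"

text \<open>d_infinity(A,u) = inf over a in A of the sup-norm distance, in the extended reals
  (so that the infimum over the empty set is +infinity).\<close>
definition dinf :: "(real^'k) set \<Rightarrow> real^'k \<Rightarrow> ereal" where
  "dinf A u = (INF a\<in>A. ereal (infnorm (a - u)))"

text \<open>Permutations of [k], as enumerations (lists) of all indices; pi_i = pi ! (i-1).\<close>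
definition perms :: "('k::finite) list set" where
  "perms = {\<pi>. distinct \<pi> \<and> set \<pi> = UNIV}"

definition ind :: "'k list \<Rightarrow> nat \<Rightarrow> real^'k" where
  "ind \<pi> i = (\<chi> j. if j \<in> set (take i \<pi>) then 1 else 0)"

definition Vpy :: "('k::finite) list \<Rightarrow> real^'k \<Rightarrow> (real^'k) set" where
  "Vpy \<pi> y = {emult (ind \<pi> i) y | i. i \<le> CARD('k)}"

definition Vface :: "((real^('k::finite)) set) set" where
  "Vface = (\<Union>{Pow (Vpy \<pi> y) | \<pi> y. \<pi> \<in> perms \<and> y \<in> Ycube})"

definition submodular_fun :: "(('k::finite) set \<Rightarrow> real) \<Rightarrow> bool" where
  "submodular_fun f \<longleftrightarrow>
     (\<forall>A B. f (A \<union> B) + f (A \<inter> B) \<le> f A + f B) \<and>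
     (\<forall>A B. A \<subseteq> B \<longrightarrow> f A \<le> f B) \<and>
     f {} = 0"

definition Fk :: "(('k::finite) set \<Rightarrow> real) set" where
  "Fk = {f. submodular_fun f}"

definition lovasz :: "(('k::finite) set \<Rightarrow> real) \<Rightarrow> real^'k \<Rightarrow> real" where
  "lovasz f x = Max ((\<lambda>\<pi>. \<Sum>i<length \<pi>. x$(\<pi>!i) *
        (f (set (take (Suc i) \<pi>)) - f (set (take i \<pi>)))) ` perms)"

definition lovasz_hinge :: "(('k::finite) set \<Rightarrow> real) \<Rightarrow> real^'k \<Rightarrow> real^'k \<Rightarrow> real" where
  "lovasz_hinge f u y = lovasz f (\<chi> i. max 0 (1 - u$i * y$i))"

definition exp_hinge :: "(('k::finite) set \<Rightarrow> real) \<Rightarrow> real^'k \<Rightarrow> (real^'k \<Rightarrow> real) \<Rightarrow> real" where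
  "exp_hinge f u p = (\<Sum>y\<in>Ycube. p y * lovasz_hinge f u y)"

definition argmin_set :: "(('k::finite) set \<Rightarrow> real) \<Rightarrow> (real^'k \<Rightarrow> real) \<Rightarrow> (real^'k) set" where
  "argmin_set f p = {u. \<forall>u'. exp_hinge f u p \<le> exp_hinge f u' p}"

definition Uf :: "(('k::finite) set \<Rightarrow> real) \<Rightarrow> ((real^'k) set) set" where
  "Uf f = {argmin_set f p | p. p \<in> DeltaY}"

definition PsiHat :: "real \<Rightarrow> real^('k::finite) \<Rightarrow> (real^'k) set" where
  "PsiHat \<epsilon> u = \<Inter>{V \<in> Vface. dinf (convex hull V) (clip u) < ereal \<epsilon>}"

definition Psif :: "(('k::finite) set \<Rightarrow> real) \<Rightarrow> real \<Rightarrow> real^'k \<Rightarrow> (real^'k) set" where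
  "Psif f \<epsilon> u = Vcube \<inter> \<Inter>{U \<in> Uf f. dinf U u < ereal \<epsilon>}"

end

theory Submission
  imports Defs
begin

text \<open>
  Every point of [-1,1]^k is a convex combination of a chain of vertices 1_{pi,i} \<odot> s
  (i = 0..k, s a sign vector), and every set of such vertices belongs to V^face; applied to
  the clipped point this already gives PsiHat(u) \<subseteq> V.
  Now let U = argmin L^f(.;p) contain a point a with |a - u|_inf < eps.  Clipping only lowers
  the hinge loss, so c = clip a is again a minimiser, and |c - clip u|_inf < eps.  For each
  label y the hinge vectors (1 - w \<odot> y)_+ of the chain vertices w are sums of two indicators
  of sets from a single chain, on which the Lovasz extension is linear; hence the loss at c is
  at least the matching convex combination of the losses at the vertices.  As c is a
  minimiser, so is every vertex of positive weight: these vertices form a set W \<in> V^face with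
  W \<subseteq> U and c in its convex hull, hence every v \<in> PsiHat(u) lies in W \<subseteq> U.
\<close>

definition lovasz_lin :: "(('k::finite) set \<Rightarrow> real) \<Rightarrow> 'k list \<Rightarrow> real^'k \<Rightarrow> real" where
  "lovasz_lin f \<tau> x = (\<Sum>i<length \<tau>. x$(\<tau>!i) * (f (set (take (Suc i) \<tau>)) - f (set (take i \<tau>))))"

definition indicator_vec :: "('k::finite) set \<Rightarrow> real^'k" where
  "indicator_vec A = (\<chi> j. if j \<in> A then 1 else 0)"

lemma finite_perms: "finite (perms :: ('k::finite) list set)"
proof -
  have "perms \<subseteq> {xs. set xs \<subseteq> (UNIV::'k set) \<and> distinct xs}" unfolding perms_def by auto
  thus ?thesis using finite_subset_distinct[of "UNIV::'k set"] finite_subset by auto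
qed

lemma perms_nonempty: "(perms :: ('k::finite) list set) \<noteq> {}"
  using finite_distinct_list[of "UNIV::'k set"] unfolding perms_def by auto

lemma lovasz_lin_le_lovasz: "\<tau> \<in> perms \<Longrightarrow> lovasz_lin f \<tau> x \<le> lovasz f x"
  unfolding lovasz_def lovasz_lin_def using finite_perms by (intro Max_ge) auto

lemma lovasz_leI: "(\<And>\<tau>. \<tau> \<in> perms \<Longrightarrow> lovasz_lin f \<tau> x \<le> M) \<Longrightarrow> lovasz f x \<le> M"
  unfolding lovasz_def lovasz_lin_def[symmetric] using finite_perms perms_nonempty
  by (subst Max_le_iff) auto

lemma lovasz_lin_add: "lovasz_lin f \<tau> (x + y) = lovasz_lin f \<tau> x + lovasz_lin f \<tau> y"
  unfolding lovasz_lin_def sum.distrib[symmetric] by (rule sum.cong) (auto simp: algebra_simps)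

lemma lovasz_lin_scaleR: "lovasz_lin f \<tau> (a *\<^sub>R x) = a * lovasz_lin f \<tau> x"
  unfolding lovasz_lin_def by (simp add: sum_distrib_left algebra_simps)

lemma lovasz_lin_zero: "lovasz_lin f \<tau> 0 = 0"
  unfolding lovasz_lin_def by simp

lemma lovasz_lin_sum:
  "finite I \<Longrightarrow> lovasz_lin f \<tau> (\<Sum>i\<in>I. a i *\<^sub>R x i) = (\<Sum>i\<in>I. a i * lovasz_lin f \<tau> (x i))"
  by (induction I rule: finite_induct) (simp_all add: lovasz_lin_zero lovasz_lin_add lovasz_lin_scaleR)

lemma lovasz_lin_mono:
  assumes "mono f" "\<And>j. x$j \<le> x'$j"
  shows "lovasz_lin f \<tau> x \<le> lovasz_lin f \<tau> x'"
  unfolding lovasz_lin_def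
proof (rule sum_mono)
  fix i
  have "set (take i \<tau>) \<subseteq> set (take (Suc i) \<tau>)" by (simp add: set_take_subset_set_take)
  hence "f (set (take i \<tau>)) \<le> f (set (take (Suc i) \<tau>))" using assms(1) by (simp add: monoD)
  thus "x $ (\<tau> ! i) * (f (set (take (Suc i) \<tau>)) - f (set (take i \<tau>)))
         \<le> x' $ (\<tau> ! i) * (f (set (take (Suc i) \<tau>)) - f (set (take i \<tau>)))"
    using assms(2) by (intro mult_right_mono) auto
qed

lemma lovasz_mono:
  assumes "mono f" "\<And>j. x$j \<le> x'$j"
  shows "lovasz f x \<le> lovasz f x'"
  by (rule lovasz_leI) (meson assms lovasz_lin_mono lovasz_lin_le_lovasz order_trans)

lemma submodular_fun_mono: "submodular_fun f \<Longrightarrow> mono f"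
  unfolding submodular_fun_def by (auto intro: monoI)

lemma lovasz_lin_partial_indicator_le:
  assumes "submodular_fun f" "m \<le> length \<tau>"
  shows "(\<Sum>i<m. (if \<tau>!i \<in> A then 1 else 0) * (f (set (take (Suc i) \<tau>)) - f (set (take i \<tau>))))
         \<le> f (A \<inter> set (take m \<tau>))"
  using assms(2)
proof (induction m)
  case 0
  then show ?case using assms(1) unfolding submodular_fun_def by simp
next
  case (Suc m)
  let ?T = "set (take m \<tau>)" and ?T' = "set (take (Suc m) \<tau>)"
  have T': "?T' = insert (\<tau>!m) ?T" using Suc.prems by (simp add: take_Suc_conv_app_nth)
  show ?case
  proof (cases "\<tau>!m \<in> A")
    case True
    have "f ((A \<inter> ?T') \<union> ?T) + f ((A \<inter> ?T') \<inter> ?T) \<le> f (A \<inter> ?T') + f ?T"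
      using assms(1) unfolding submodular_fun_def by blast
    moreover have "(A \<inter> ?T') \<union> ?T = ?T'" "(A \<inter> ?T') \<inter> ?T = A \<inter> ?T" using True T' by auto
    ultimately show ?thesis using Suc True by simp
  next
    case False
    then have "A \<inter> ?T' = A \<inter> ?T" using T' by auto
    then show ?thesis using Suc False by simp
  qed
qed

lemma lovasz_lin_indicator_le:
  assumes "submodular_fun f" "\<tau> \<in> perms"
  shows "lovasz_lin f \<tau> (indicator_vec A) \<le> f A"
proof -
  have "lovasz_lin f \<tau> (indicator_vec A) = (\<Sum>i<length \<tau>.
      (if \<tau>!i \<in> A then 1 else 0) * (f (set (take (Suc i) \<tau>)) - f (set (take i \<tau>))))"
    unfolding lovasz_lin_def indicator_vec_def by simp
  also have "\<dots> \<le> f (A \<inter> set (take (length \<tau>) \<tau>))"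
    by (rule lovasz_lin_partial_indicator_le[OF assms(1)]) simp
  also have "\<dots> = f A" using assms(2) unfolding perms_def by simp
  finally show ?thesis .
qed

lemma lovasz_lin_prefix_indicator:
  assumes "f {} = 0" "distinct \<sigma>"
  shows "lovasz_lin f \<sigma> (indicator_vec (set (take l \<sigma>))) = f (set (take l \<sigma>))"
proof -
  have mem: "\<sigma>!i \<in> set (take l \<sigma>) \<longleftrightarrow> i < l" if "i < length \<sigma>" for i
    using that assms(2) by (auto simp: in_set_conv_nth nth_eq_iff_index_eq)
  have "lovasz_lin f \<sigma> (indicator_vec (set (take l \<sigma>)))
      = (\<Sum>i<length \<sigma>. (if i < l then 1 else 0) * (f (set (take (Suc i) \<sigma>)) - f (set (take i \<sigma>))))"
    unfolding lovasz_lin_def indicator_vec_def using mem by (intro sum.cong) auto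
  also have "\<dots> = (\<Sum>i<min l (length \<sigma>). f (set (take (Suc i) \<sigma>)) - f (set (take i \<sigma>)))"
    by (rule sum.mono_neutral_cong_right) auto
  also have "\<dots> = f (set (take (min l (length \<sigma>)) \<sigma>)) - f (set (take 0 \<sigma>))"
    by (rule sum_lessThan_telescope)
  also have "\<dots> = f (set (take l \<sigma>))" using assms(1) by (simp add: min_def)
  finally show ?thesis .
qed

text \<open>Filtering the elements of \<open>N\<close> to the front in the order of \<open>\<pi>\<close>, and the others to the back in
  reverse order, turns all the sets \<open>{\<pi>\<^sub>1..\<pi>\<^sub>i} \<inter> N\<close> and \<open>N \<union> {\<pi>\<^sub>i\<^sub>+\<^sub>1..\<pi>\<^sub>k}\<close> into prefixes.\<close>
lemma perm_with_nested_prefixes: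
  assumes "\<pi> \<in> perms"
  obtains \<sigma> where "\<sigma> \<in> perms"
    "\<And>i. set (take i \<pi>) \<inter> N \<in> range (\<lambda>l. set (take l \<sigma>))"
    "\<And>i. - (set (take i \<pi>) - N) \<in> range (\<lambda>l. set (take l \<sigma>))"
proof
  let ?P = "\<lambda>j. j \<in> N" and ?Q = "\<lambda>j. j \<notin> N"
  define \<sigma> where "\<sigma> = filter ?P \<pi> @ rev (filter ?Q \<pi>)"
  have dp: "distinct \<pi>" and sp: "set \<pi> = UNIV" using assms unfolding perms_def by auto
  show "\<sigma> \<in> perms" unfolding perms_def \<sigma>_def using dp sp by auto
  fix i
  define t d where "t = take i \<pi>" and "d = drop i \<pi>"
  have td: "\<pi> = t @ d" unfolding t_def d_def by simp
  have disj: "set t \<inter> set d = {}" and un: "set t \<union> set d = UNIV"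
    using dp sp td by (metis distinct_append) (metis sp td set_append)
  have \<sigma>_split: "\<sigma> = filter ?P t @ filter ?P d @ rev (filter ?Q d) @ rev (filter ?Q t)"
    unfolding \<sigma>_def td by simp
  have "set (take (length (filter ?P t)) \<sigma>) = set t \<inter> N"
    unfolding \<sigma>_split by auto
  then show "set (take i \<pi>) \<inter> N \<in> range (\<lambda>l. set (take l \<sigma>))"
    unfolding t_def by (metis rangeI)
  have "take (length (filter ?P t) + length (filter ?P d) + length (filter ?Q d)) \<sigma>
      = filter ?P t @ filter ?P d @ rev (filter ?Q d)"
    unfolding \<sigma>_split by simp
  then have "set (take (length (filter ?P t) + length (filter ?P d) + length (filter ?Q d)) \<sigma>)
      = - (set t - N)"
    using disj un by auto
  then show "- (set (take i \<pi>) - N) \<in> range (\<lambda>l. set (take l \<sigma>))"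
    unfolding t_def by (metis rangeI)
qed

lemma Ycube_component: "y \<in> Ycube \<Longrightarrow> y$j = -1 \<or> y$j = 1"
  unfolding Ycube_def by auto

lemma clip_component: "clip u $ j = sgn (u$j) * min \<bar>u$j\<bar> 1"
  unfolding clip_def by simp

lemma abs_clip_le_1: "\<bar>clip u $ j\<bar> \<le> 1"
  unfolding clip_component by (auto simp: sgn_if abs_mult)

lemma infnorm_clip_diff_le: "infnorm (clip a - clip b) \<le> infnorm (a - b)"
proof -
  have "\<bar>(clip a - clip b) $ j\<bar> \<le> \<bar>(a - b) $ j\<bar>" for j
    unfolding vector_minus_component clip_component by (auto simp: sgn_if min_def)
  also have "\<bar>(a - b) $ j\<bar> \<le> infnorm (a - b)" for j by (rule component_le_infnorm_cart)
  finally show ?thesis unfolding infnorm_cart[of "clip a - clip b"] by (intro cSup_least) auto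
qed

definition chain_vertex :: "('k::finite) list \<Rightarrow> real^'k \<Rightarrow> nat \<Rightarrow> real^'k" where
  "chain_vertex \<pi> s i = emult (ind \<pi> i) s"

lemma chain_vertex_component:
  "chain_vertex \<pi> s i $ j = (if j \<in> set (take i \<pi>) then s$j else 0)"
  unfolding chain_vertex_def emult_def ind_def by simp

lemma Vpy_eq_chain_vertices:
  fixes \<pi> :: "('k::finite) list"
  shows "Vpy \<pi> s = chain_vertex \<pi> s ` {..CARD('k)}"
  unfolding Vpy_def chain_vertex_def by auto

lemma Vpy_subset_Vcube:
  fixes \<pi> :: "('k::finite) list"
  assumes "s \<in> Ycube"
  shows "Vpy \<pi> s \<subseteq> Vcube"
proof -
  have "chain_vertex \<pi> s i $ j = -1 \<or> chain_vertex \<pi> s i $ j = 0 \<or> chain_vertex \<pi> s i $ j = 1" for i j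
    using Ycube_component[OF assms, of j] by (auto simp: chain_vertex_component)
  then show ?thesis unfolding Vpy_eq_chain_vertices Vcube_def by auto
qed

lemma subset_Vpy_in_Vface: "\<pi> \<in> perms \<Longrightarrow> s \<in> Ycube \<Longrightarrow> W \<subseteq> Vpy \<pi> s \<Longrightarrow> W \<in> Vface"
proof -
  assume "\<pi> \<in> perms" "s \<in> Ycube" "W \<subseteq> Vpy \<pi> s"
  then have "W \<in> Pow (Vpy \<pi> s)" "Pow (Vpy \<pi> s) \<in> {Pow (Vpy \<pi> y) | \<pi> y. \<pi> \<in> perms \<and> y \<in> Ycube}"
    by auto
  then show ?thesis unfolding Vface_def by (rule UnionI[rotated])
qed

lemma perm_sorted_by_abs_desc:
  fixes c :: "real^'k::finite"
  obtains \<pi> where "\<pi> \<in> perms"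
    "\<And>p q. p \<le> q \<Longrightarrow> q < CARD('k) \<Longrightarrow> \<bar>c$(\<pi>!q)\<bar> \<le> \<bar>c$(\<pi>!p)\<bar>"
proof -
  obtain xs :: "'k list" where xs: "set xs = UNIV" "distinct xs"
    using finite_distinct_list[of "UNIV::'k set"] by auto
  define \<pi> where "\<pi> = sort_key (\<lambda>j. - \<bar>c$j\<bar>) xs"
  have \<pi>: "distinct \<pi>" "set \<pi> = UNIV" unfolding \<pi>_def using xs by simp_all
  then have len: "length \<pi> = CARD('k)" using distinct_card[of \<pi>] by simp
  have sorted: "sorted (map (\<lambda>j. - \<bar>c$j\<bar>) \<pi>)" unfolding \<pi>_def by simp
  have "\<bar>c$(\<pi>!q)\<bar> \<le> \<bar>c$(\<pi>!p)\<bar>" if "p \<le> q" "q < CARD('k)" for p q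
    using sorted_nth_mono[OF sorted, of p q] that len by simp
  moreover have "\<pi> \<in> perms" using \<pi> by (simp add: perms_def)
  ultimately show thesis using that by blast
qed

lemma chain_combination_component:
  fixes \<pi> :: "('k::finite) list"
  assumes "\<pi> \<in> perms" "p < CARD('k)"
  shows "(\<Sum>i\<le>CARD('k). lam i *\<^sub>R chain_vertex \<pi> s i) $ (\<pi>!p)
    = (\<Sum>i\<in>{p<..CARD('k)}. lam i) * s$(\<pi>!p)"
proof -
  have "distinct \<pi>" "length \<pi> = CARD('k)"
    using assms(1) unfolding perms_def by (auto simp: distinct_card[symmetric])
  then have mem: "\<pi>!p \<in> set (take i \<pi>) \<longleftrightarrow> p < i" for i
    using assms(2) by (auto simp: in_set_conv_nth nth_eq_iff_index_eq)
  have "(\<Sum>i\<le>CARD('k). lam i *\<^sub>R chain_vertex \<pi> s i) $ (\<pi>!p)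
      = (\<Sum>i\<le>CARD('k). if p < i then lam i * s$(\<pi>!p) else 0)"
    by (auto simp: chain_vertex_component mem intro!: sum.cong)
  also have "\<dots> = (\<Sum>i\<in>{..CARD('k)} \<inter> {i. p < i}. lam i * s$(\<pi>!p))"
    by (simp add: sum.If_cases)
  also have "{..CARD('k)} \<inter> {i. p < i} = {p<..CARD('k)}" by auto
  finally show ?thesis by (simp add: sum_distrib_right)
qed

text \<open>With \<open>\<pi>\<close> ordering the coordinates by decreasing \<open>|c\<^sub>j|\<close> and \<open>a\<^sub>p = |c\<^sub>\<pi>\<^sub>p|\<close> (\<open>a\<^sub>k = 0\<close>),
  the weights are \<open>1 - a\<^sub>0\<close> and the gaps \<open>a\<^sub>i\<^sub>-\<^sub>1 - a\<^sub>i\<close>.\<close>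
lemma chain_decomposition:
  fixes c :: "real^'k::finite"
  assumes "\<And>j. \<bar>c$j\<bar> \<le> 1"
  obtains \<pi> s lam where "\<pi> \<in> perms" "s \<in> Ycube" "\<forall>i. 0 \<le> lam i" "(\<Sum>i\<le>CARD('k). lam i) = 1"
    "c = (\<Sum>i\<le>CARD('k). lam i *\<^sub>R chain_vertex \<pi> s i)"
proof -
  let ?n = "CARD('k)"
  obtain \<pi> where \<pi>: "\<pi> \<in> perms"
    and sorted: "\<And>p q. p \<le> q \<Longrightarrow> q < ?n \<Longrightarrow> \<bar>c$(\<pi>!q)\<bar> \<le> \<bar>c$(\<pi>!p)\<bar>"
    using perm_sorted_by_abs_desc[of c] by blast
  define s :: "real^'k" where "s = (\<chi> j. if c$j < 0 then -1 else 1)"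
  define a where "a p = (if p < ?n then \<bar>c$(\<pi>!p)\<bar> else 0)" for p
  have a_antimono: "a q \<le> a p" if "p \<le> q" for p q
    using sorted[OF that] that unfolding a_def by auto
  define lam where "lam i = (if i = 0 then 1 - a 0 else a (i - 1) - a i)" for i
  have "s \<in> Ycube" unfolding Ycube_def s_def by auto
  moreover have "\<forall>i. 0 \<le> lam i" unfolding lam_def using assms a_antimono by (auto simp: a_def)
  moreover have "(\<Sum>i\<le>?n. lam i) = 1"
  proof -
    have "(\<Sum>i\<le>?n. lam i) = lam 0 + (\<Sum>i<?n. lam (Suc i))" by (rule sum.atMost_shift)
    also have "(\<Sum>i<?n. lam (Suc i)) = (\<Sum>i<?n. a i - a (Suc i))" unfolding lam_def by simp
    also have "\<dots> = a 0 - a ?n" by (rule sum_lessThan_telescope')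
    finally show ?thesis unfolding lam_def a_def by simp
  qed
  moreover have "c = (\<Sum>i\<le>?n. lam i *\<^sub>R chain_vertex \<pi> s i)"
    unfolding vec_eq_iff
  proof
    fix j
    have "set \<pi> = UNIV" "length \<pi> = ?n"
      using \<pi> unfolding perms_def by (auto simp: distinct_card[symmetric])
    then obtain p where p: "p < ?n" and j: "j = \<pi>!p" by (metis UNIV_I in_set_conv_nth)
    have "(\<Sum>i\<in>{p<..?n}. lam i) = (\<Sum>i\<in>{p..<?n}. lam (Suc i))"
      unfolding sum.shift_bounds_Suc_ivl[symmetric] by (rule sum.cong) auto
    also have "\<dots> = (\<Sum>i\<in>{p..<?n}. a i - a (Suc i))" unfolding lam_def by simp
    also have "\<dots> = a p"
      using sum_Suc_diff'[of p ?n a] p unfolding sum_subtractf by (simp add: a_def)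
    finally show "c$j = (\<Sum>i\<le>?n. lam i *\<^sub>R chain_vertex \<pi> s i)$j"
      unfolding j chain_combination_component[OF \<pi> p] using p by (auto simp: a_def s_def)
  qed
  ultimately show ?thesis using that \<pi> by blast
qed

lemma convex_sum_in_convex_hull_of_support:
  fixes x :: "'b \<Rightarrow> 'a::real_vector"
  assumes "finite I" "\<And>i. i \<in> I \<Longrightarrow> 0 \<le> lam i" "sum lam I = 1"
    and "\<And>i. i \<in> I \<Longrightarrow> 0 < lam i \<Longrightarrow> x i \<in> W"
  shows "(\<Sum>i\<in>I. lam i *\<^sub>R x i) \<in> convex hull W"
proof -
  define S where "S = {i \<in> I. 0 < lam i}"
  have S: "finite S" "S \<subseteq> I" using assms(1) unfolding S_def by auto
  have zero: "\<forall>i\<in>I - S. lam i = 0" using assms(2) unfolding S_def by force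
  then have "sum lam S = 1" using sum.mono_neutral_left[OF assms(1) S(2)] assms(3) by metis
  moreover have "(\<Sum>i\<in>S. lam i *\<^sub>R x i) = (\<Sum>i\<in>I. lam i *\<^sub>R x i)"
    using zero by (intro sum.mono_neutral_left[OF assms(1) S(2)]) simp
  moreover have "x i \<in> convex hull W" if "i \<in> S" for i
    using that assms(4) unfolding S_def by (simp add: hull_inc)
  ultimately show ?thesis
    using convex_sum[OF S(1) convex_convex_hull, of lam x] assms(2) S(2) by auto
qed

lemma convex_weights_on_minimizers:
  fixes g :: "'b \<Rightarrow> real"
  assumes "finite I" "\<And>i. i \<in> I \<Longrightarrow> 0 \<le> lam i" "sum lam I = 1"
    and "\<And>x. g c \<le> g x" "(\<Sum>i\<in>I. lam i * g (w i)) \<le> g c"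
    and "i \<in> I" "0 < lam i"
  shows "g (w i) = g c"
proof -
  have nonneg: "0 \<le> lam i * (g (w i) - g c)" if "i \<in> I" for i
    using assms(2,4) that by simp
  have "(\<Sum>i\<in>I. lam i * (g (w i) - g c)) = (\<Sum>i\<in>I. lam i * g (w i)) - sum lam I * g c"
    by (simp add: right_diff_distrib sum_subtractf sum_distrib_right)
  then have "(\<Sum>i\<in>I. lam i * (g (w i) - g c)) = (\<Sum>i\<in>I. lam i * g (w i)) - g c"
    using assms(3) by simp
  moreover have "0 \<le> (\<Sum>i\<in>I. lam i * (g (w i) - g c))" by (rule sum_nonneg) (rule nonneg)
  ultimately have "(\<Sum>i\<in>I. lam i * (g (w i) - g c)) = 0" using assms(5) by linarith
  then have "lam i * (g (w i) - g c) = 0"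
    using assms(6) by (subst (asm) sum_nonneg_eq_0_iff[OF assms(1) nonneg]) auto
  then show ?thesis using assms(7) by simp
qed

definition hinge_vec :: "real^('k::finite) \<Rightarrow> real^'k \<Rightarrow> real^'k" where
  "hinge_vec u y = (\<chi> j. max 0 (1 - u$j * y$j))"

lemma lovasz_hinge_eq: "lovasz_hinge f u y = lovasz f (hinge_vec u y)"
  unfolding lovasz_hinge_def hinge_vec_def ..

lemma hinge_vec_convex_sum:
  fixes w :: "'b \<Rightarrow> real^('k::finite)"
  assumes "\<And>i. i \<in> I \<Longrightarrow> 0 \<le> lam i" "sum lam I = 1" "\<And>i j. i \<in> I \<Longrightarrow> w i $ j * y$j \<le> 1"
  shows "hinge_vec (\<Sum>i\<in>I. lam i *\<^sub>R w i) y = (\<Sum>i\<in>I. lam i *\<^sub>R hinge_vec (w i) y)"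
proof -
  have "hinge_vec (\<Sum>i\<in>I. lam i *\<^sub>R w i) y $ j = (\<Sum>i\<in>I. lam i *\<^sub>R hinge_vec (w i) y) $ j" for j
  proof -
    have "(\<Sum>i\<in>I. lam i *\<^sub>R hinge_vec (w i) y) $ j = (\<Sum>i\<in>I. lam i * (1 - w i $ j * y$j))"
      using assms(3) by (auto simp: hinge_vec_def intro!: sum.cong)
    also have "\<dots> = 1 - (\<Sum>i\<in>I. lam i *\<^sub>R w i) $ j * y$j"
      using assms(2) by (simp add: right_diff_distrib sum_subtractf sum_distrib_right mult.assoc)
    finally have "(\<Sum>i\<in>I. lam i *\<^sub>R hinge_vec (w i) y) $ j = 1 - (\<Sum>i\<in>I. lam i *\<^sub>R w i) $ j * y$j" .
    moreover have "0 \<le> (\<Sum>i\<in>I. lam i *\<^sub>R hinge_vec (w i) y) $ j"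
      using assms(1) by (auto simp: hinge_vec_def intro!: sum_nonneg)
    ultimately show ?thesis by (simp add: hinge_vec_def)
  qed
  then show ?thesis by (simp add: vec_eq_iff)
qed

lemma hinge_vec_clip_le: "y \<in> Ycube \<Longrightarrow> hinge_vec (clip u) y $ j \<le> hinge_vec u y $ j"
  using Ycube_component[of y j] by (auto simp: hinge_vec_def clip_component sgn_if min_def)

lemma chain_vertex_times_label_le_1:
  "s \<in> Ycube \<Longrightarrow> y \<in> Ycube \<Longrightarrow> chain_vertex \<pi> s i $ j * y$j \<le> 1"
  using Ycube_component[of s j] Ycube_component[of y j] by (auto simp: chain_vertex_component)

lemma hinge_vec_chain_vertex:
  assumes "s \<in> Ycube" "y \<in> Ycube"
  defines "N \<equiv> {j. s$j * y$j = -1}"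
  shows "hinge_vec (chain_vertex \<pi> s i) y
    = indicator_vec (set (take i \<pi>) \<inter> N) + indicator_vec (- (set (take i \<pi>) - N))"
proof -
  have "hinge_vec (chain_vertex \<pi> s i) y $ j
      = (indicator_vec (set (take i \<pi>) \<inter> N) + indicator_vec (- (set (take i \<pi>) - N))) $ j" for j
    using Ycube_component[OF assms(1), of j] Ycube_component[OF assms(2), of j]
    by (auto simp: hinge_vec_def chain_vertex_component indicator_vec_def N_def)
  then show ?thesis by (simp add: vec_eq_iff)
qed

text \<open>The sets \<open>{\<pi>\<^sub>1..\<pi>\<^sub>i} \<inter> N\<close> increase to \<open>N\<close> and the sets \<open>N \<union> {\<pi>\<^sub>i\<^sub>+\<^sub>1..\<pi>\<^sub>k}\<close> decrease to \<open>N\<close>,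
  so a single ordering \<open>\<sigma>\<close> has all of them as prefixes, and the linear piece of \<open>\<sigma>\<close>
  evaluates \<open>f\<close> exactly on all their indicators.\<close>
lemma lovasz_hinge_chain_concave:
  fixes f :: "('k::finite) set \<Rightarrow> real"
  assumes f: "submodular_fun f" and \<pi>: "\<pi> \<in> perms" and s: "s \<in> Ycube" and y: "y \<in> Ycube"
    and lam: "\<forall>i. 0 \<le> lam i" "(\<Sum>i\<le>CARD('k). lam i) = 1"
  shows "(\<Sum>i\<le>CARD('k). lam i * lovasz_hinge f (chain_vertex \<pi> s i) y)
    \<le> lovasz_hinge f (\<Sum>i\<le>CARD('k). lam i *\<^sub>R chain_vertex \<pi> s i) y"
proof -
  let ?n = "CARD('k)" and ?w = "chain_vertex \<pi> s"
  define N where "N = {j. s$j * y$j = -1}"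
  define A where "A i = set (take i \<pi>) \<inter> N" for i
  define B where "B i = - (set (take i \<pi>) - N)" for i
  obtain \<sigma> where \<sigma>: "\<sigma> \<in> perms"
    and A_prefix: "\<And>i. A i \<in> range (\<lambda>l. set (take l \<sigma>))"
    and B_prefix: "\<And>i. B i \<in> range (\<lambda>l. set (take l \<sigma>))"
    using perm_with_nested_prefixes[OF \<pi>, of N] unfolding A_def B_def by blast
  have f0: "f {} = 0" using f by (simp add: submodular_fun_def)
  have "distinct \<sigma>" using \<sigma> by (simp add: perms_def)
  note prefix = lovasz_lin_prefix_indicator[of f \<sigma>, OF f0 this]
  have lin_A: "lovasz_lin f \<sigma> (indicator_vec (A i)) = f (A i)" for i
    using A_prefix[of i] prefix by auto
  have lin_B: "lovasz_lin f \<sigma> (indicator_vec (B i)) = f (B i)" for i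
    using B_prefix[of i] prefix by auto
  have hinge: "hinge_vec (?w i) y = indicator_vec (A i) + indicator_vec (B i)" for i
    unfolding A_def B_def N_def by (rule hinge_vec_chain_vertex[OF s y])
  have vertex_le: "lovasz_hinge f (?w i) y \<le> f (A i) + f (B i)" for i
    unfolding lovasz_hinge_eq hinge
    by (rule lovasz_leI) (simp add: lovasz_lin_add add_mono lovasz_lin_indicator_le[OF f])
  have "(\<Sum>i\<le>?n. lam i * lovasz_hinge f (?w i) y) \<le> (\<Sum>i\<le>?n. lam i * (f (A i) + f (B i)))"
    using lam(1) vertex_le by (intro sum_mono mult_left_mono) auto
  also have "\<dots> = lovasz_lin f \<sigma> (\<Sum>i\<le>?n. lam i *\<^sub>R hinge_vec (?w i) y)"
    by (simp add: lovasz_lin_sum hinge lovasz_lin_add lin_A lin_B)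
  also have "\<dots> = lovasz_lin f \<sigma> (hinge_vec (\<Sum>i\<le>?n. lam i *\<^sub>R ?w i) y)"
    using lam chain_vertex_times_label_le_1[OF s y] by (simp add: hinge_vec_convex_sum)
  also have "\<dots> \<le> lovasz_hinge f (\<Sum>i\<le>?n. lam i *\<^sub>R ?w i) y"
    unfolding lovasz_hinge_eq by (rule lovasz_lin_le_lovasz[OF \<sigma>])
  finally show ?thesis .
qed

lemma exp_hinge_chain_concave:
  fixes f :: "('k::finite) set \<Rightarrow> real"
  assumes "submodular_fun f" "\<pi> \<in> perms" "s \<in> Ycube" "\<And>y. 0 \<le> p y"
    and "\<forall>i. 0 \<le> lam i" "(\<Sum>i\<le>CARD('k). lam i) = 1"
  shows "(\<Sum>i\<le>CARD('k). lam i * exp_hinge f (chain_vertex \<pi> s i) p)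
    \<le> exp_hinge f (\<Sum>i\<le>CARD('k). lam i *\<^sub>R chain_vertex \<pi> s i) p"
proof -
  have "(\<Sum>i\<le>CARD('k). lam i * exp_hinge f (chain_vertex \<pi> s i) p)
      = (\<Sum>y\<in>Ycube. p y * (\<Sum>i\<le>CARD('k). lam i * lovasz_hinge f (chain_vertex \<pi> s i) y))"
    unfolding exp_hinge_def
    by (simp add: sum_distrib_left sum.swap[of _ "{..CARD('k)}"] algebra_simps)
  also have "\<dots> \<le> exp_hinge f (\<Sum>i\<le>CARD('k). lam i *\<^sub>R chain_vertex \<pi> s i) p"
    unfolding exp_hinge_def using assms
    by (intro sum_mono mult_left_mono lovasz_hinge_chain_concave) auto
  finally show ?thesis .
qed

lemma exp_hinge_clip_le:
  assumes "mono f" "\<And>y. 0 \<le> p y"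
  shows "exp_hinge f (clip a) p \<le> exp_hinge f a p"
  unfolding exp_hinge_def lovasz_hinge_eq
  by (auto intro!: sum_mono mult_left_mono assms lovasz_mono hinge_vec_clip_le)

lemma exists_Vpy_hull_containing:
  fixes c :: "real^'k::finite"
  assumes "\<And>j. \<bar>c$j\<bar> \<le> 1"
  obtains \<pi> s where "\<pi> \<in> perms" "s \<in> Ycube" "c \<in> convex hull (Vpy \<pi> s)"
proof -
  obtain \<pi> s lam where \<pi>: "\<pi> \<in> perms" and s: "s \<in> Ycube"
    and lam: "\<forall>i. 0 \<le> lam i" "(\<Sum>i\<le>CARD('k). lam i) = 1"
    and c: "c = (\<Sum>i\<le>CARD('k). lam i *\<^sub>R chain_vertex \<pi> s i)"
    using chain_decomposition[OF assms] by blast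
  have "c \<in> convex hull (Vpy \<pi> s)"
    unfolding c Vpy_eq_chain_vertices
    by (rule convex_sum_in_convex_hull_of_support) (use lam in auto)
  with \<pi> s show thesis by (rule that)
qed

lemma face_of_minimizers_containing_clip:
  fixes f :: "('k::finite) set \<Rightarrow> real"
  assumes f: "submodular_fun f" and p: "p \<in> DeltaY" and a: "a \<in> argmin_set f p"
  obtains W where "W \<in> Vface" "W \<subseteq> argmin_set f p" "clip a \<in> convex hull W"
proof -
  let ?g = "\<lambda>x. exp_hinge f x p"
  have p_nonneg: "\<And>y. 0 \<le> p y" using p by (simp add: DeltaY_def)
  have "?g (clip a) \<le> ?g a"
    using submodular_fun_mono[OF f] p_nonneg by (rule exp_hinge_clip_le)
  moreover have "?g a \<le> ?g x" for x using a by (simp add: argmin_set_def)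
  ultimately have clip_min: "?g (clip a) \<le> ?g x" for x by (rule order_trans)
  obtain \<pi> s lam where \<pi>: "\<pi> \<in> perms" and s: "s \<in> Ycube"
    and lam: "\<forall>i. 0 \<le> lam i" "(\<Sum>i\<le>CARD('k). lam i) = 1"
    and c: "clip a = (\<Sum>i\<le>CARD('k). lam i *\<^sub>R chain_vertex \<pi> s i)"
    by (rule chain_decomposition[OF abs_clip_le_1])
  have lam_nonneg: "0 \<le> lam i" for i using lam(1) by blast
  have concave: "(\<Sum>i\<le>CARD('k). lam i * ?g (chain_vertex \<pi> s i)) \<le> ?g (clip a)"
    unfolding c using f \<pi> s p_nonneg lam by (rule exp_hinge_chain_concave)
  note vertex_min = convex_weights_on_minimizers[of "{..CARD('k)}" lam ?g "clip a" "chain_vertex \<pi> s",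
      OF finite_atMost lam_nonneg lam(2) clip_min concave]
  define W where "W = chain_vertex \<pi> s ` {i. i \<le> CARD('k) \<and> 0 < lam i}"
  have "W \<subseteq> argmin_set f p"
  proof
    fix x assume "x \<in> W"
    then obtain i where "i \<le> CARD('k)" "0 < lam i" and x: "x = chain_vertex \<pi> s i"
      unfolding W_def by blast
    then have "?g x = ?g (clip a)" using vertex_min by simp
    then show "x \<in> argmin_set f p" using clip_min by (simp add: argmin_set_def)
  qed
  moreover have "W \<subseteq> Vpy \<pi> s" unfolding W_def Vpy_eq_chain_vertices by auto
  then have "W \<in> Vface" by (rule subset_Vpy_in_Vface[OF \<pi> s])
  moreover have "clip a \<in> convex hull W" unfolding c
    by (rule convex_sum_in_convex_hull_of_support[OF finite_atMost lam_nonneg lam(2)]) (simp add: W_def)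
  ultimately show thesis using that by blast
qed

lemma PsiHat_memD:
  assumes "v \<in> PsiHat \<epsilon> u" "W \<in> Vface" "clip x \<in> convex hull W" "infnorm (x - u) < \<epsilon>"
  shows "v \<in> W"
proof -
  have "dinf (convex hull W) (clip u) \<le> ereal (infnorm (clip x - clip u))"
    unfolding dinf_def using assms(3) by (rule INF_lower)
  also have "\<dots> < ereal \<epsilon>" using infnorm_clip_diff_le[of x u] assms(4) by simp
  finally show ?thesis using assms(1,2) unfolding PsiHat_def by blast
qed

theorem proposition2:
  fixes \<epsilon> :: real and f :: "('k::finite) set \<Rightarrow> real" and u :: "real^'k"
  assumes "\<epsilon> > 0" and "f \<in> Fk"
  shows "PsiHat \<epsilon> u \<subseteq> Psif f \<epsilon> u"
proof
  fix v assume v: "v \<in> PsiHat \<epsilon> u"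
  have f: "submodular_fun f" using assms(2) by (simp add: Fk_def)
  obtain \<pi> s where \<pi>: "\<pi> \<in> perms" and s: "s \<in> Ycube" and u: "clip u \<in> convex hull (Vpy \<pi> s)"
    by (rule exists_Vpy_hull_containing[OF abs_clip_le_1])
  have "v \<in> Vpy \<pi> s"
    using PsiHat_memD[OF v subset_Vpy_in_Vface[OF \<pi> s order_refl] u] assms(1) by (simp add: infnorm_0)
  then have "v \<in> Vcube" using Vpy_subset_Vcube[OF s] by blast
  moreover have "v \<in> U" if U: "U \<in> Uf f" and near: "dinf U u < ereal \<epsilon>" for U
  proof -
    obtain p where p: "p \<in> DeltaY" and U_eq: "U = argmin_set f p" using U unfolding Uf_def by blast
    obtain a where a: "a \<in> U" and "infnorm (a - u) < \<epsilon>"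
      using near unfolding dinf_def INF_less_iff by auto
    moreover obtain W where "W \<in> Vface" "W \<subseteq> U" "clip a \<in> convex hull W"
      using face_of_minimizers_containing_clip[OF f p] a unfolding U_eq by metis
    ultimately show ?thesis using PsiHat_memD[OF v] by blast
  qed
  ultimately show "v \<in> Psif f \<epsilon> u" unfolding Psif_def by blast
qed

end
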